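(* Let $(G,+)$ be an abelian group of order $n$ with a subgroup $H$ of order $h$. Suppose there exists an HDM$(k,n;h)$ over $G$ with hole $H$, and there exists a DCA$(k,h+1;h)$ over $H$ satisfying P1 and P2. Then there exists a DCA$(k,n+1;n)$ over $G$ satisfying P1 and P2. Moreover, if the HDM$(k,n;h)$ and the DCA$(k,h+1;h)$ are cyclic, then there exists a cyclic DCA$(k,n+1;n)$ satisfying P1 and P2.
   Context: A holey difference matrix HDM$(k,n;h)$ over an abelian group $(G,+)$ of order $n$ with hole a subgroup $H$ of order $h$ is an $(n-h)\times k$ matrix $Q=[q(i,j)]$ with entries in $G$ such that for every pair of distinct columns $j,j'$ the multiset $\{q(i,j)-q(i,j') : 0\le i\le n-h-1\}$ contains every element of $G\setminus H$ exactly once; it may be normalized so that its last column is all $0$. It is cyclic if $G=\mathbb{Z}_n$ (and then $H$ is the subgroup of $\mathbb{Z}_n$ of order $h$). A difference covering array DCA$(k,\eta;n)$ over an abelian group $G$ of order $n$ is an $\eta\times k$ matrix with entries in $G$ such that for every pair of distinct columns $j,j'$ the multiset of row differences $q(i,j)-q(i,j')$ contains every element of $G$ at least once; it is cyclic if $G=\mathbb{Z}_n$. A DCA$(k,n+1;n)$ is taken in normalized form: all entries of its last row (row $n$) and last column (column $k-1$) equal $0$. It satisfies P1 if $0$ occurs at least twice in every column, and P2 if for all distinct columns $j,j'$ with $j\neq k-1\neq j'$, the set $\{q(i,j)-q(i,j') : 0\le i\le n-1\}$ equals $G\setminus\{0\}$. *)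

theory Defs
  imports "HOL-Algebra.Algebra" "HOL-Library.Multiset"
begin

text \<open>Groups are HOL-Algebra groups written multiplicatively: the paper's
  difference q(i,j) - q(i,j') is q(i,j) \<otimes> inv q(i,j'), and the paper's 0 is \<one>.
  Matrices are functions nat \<Rightarrow> nat \<Rightarrow> 'a (row, column), only the entries with
  row < #rows and column < k matter.\<close>

definition diff_grp :: "('a, 'b) monoid_scheme \<Rightarrow> 'a \<Rightarrow> 'a \<Rightarrow> 'a" where
  "diff_grp G x y = x \<otimes>\<^bsub>G\<^esub> inv\<^bsub>G\<^esub> y"

text \<open>HDM(k,n;h) over G with hole H, where n = |G|, h = |H|: an (n-h) x k matrix.\<close>
definition is_HDM :: "('a, 'b) monoid_scheme \<Rightarrow> 'a set \<Rightarrow> nat \<Rightarrow> (nat \<Rightarrow> nat \<Rightarrow> 'a) \<Rightarrow> bool" where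
  "is_HDM G H k Q \<longleftrightarrow>
     (\<forall>i < card (carrier G) - card H. \<forall>j < k. Q i j \<in> carrier G) \<and>
     (\<forall>j < k. \<forall>j' < k. j \<noteq> j' \<longrightarrow>
        image_mset (\<lambda>i. diff_grp G (Q i j) (Q i j')) (mset_set {0..< card (carrier G) - card H})
          = mset_set (carrier G - H))"

definition is_DCA :: "('a, 'b) monoid_scheme \<Rightarrow> nat \<Rightarrow> nat \<Rightarrow> (nat \<Rightarrow> nat \<Rightarrow> 'a) \<Rightarrow> bool" where
  "is_DCA G k eta Q \<longleftrightarrow>
     (\<forall>i < eta. \<forall>j < k. Q i j \<in> carrier G) \<and>
     (\<forall>j < k. \<forall>j' < k. j \<noteq> j' \<longrightarrow>
        carrier G \<subseteq> {diff_grp G (Q i j) (Q i j') | i. i < eta})"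

definition is_normalized_DCA :: "('a, 'b) monoid_scheme \<Rightarrow> nat \<Rightarrow> (nat \<Rightarrow> nat \<Rightarrow> 'a) \<Rightarrow> bool" where
  "is_normalized_DCA G k Q \<longleftrightarrow>
     is_DCA G k (card (carrier G) + 1) Q \<and>
     (\<forall>j < k. Q (card (carrier G)) j = \<one>\<^bsub>G\<^esub>) \<and>
     (\<forall>i \<le> card (carrier G). 0 < k \<longrightarrow> Q i (k - 1) = \<one>\<^bsub>G\<^esub>)"

definition P1 :: "('a, 'b) monoid_scheme \<Rightarrow> nat \<Rightarrow> (nat \<Rightarrow> nat \<Rightarrow> 'a) \<Rightarrow> bool" where
  "P1 G k Q \<longleftrightarrow> (\<forall>j < k. 2 \<le> card {i. i \<le> card (carrier G) \<and> Q i j = \<one>\<^bsub>G\<^esub>})"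

definition P2 :: "('a, 'b) monoid_scheme \<Rightarrow> nat \<Rightarrow> (nat \<Rightarrow> nat \<Rightarrow> 'a) \<Rightarrow> bool" where
  "P2 G k Q \<longleftrightarrow> (\<forall>j < k. \<forall>j' < k. j \<noteq> j' \<and> j \<noteq> k - 1 \<and> j' \<noteq> k - 1 \<longrightarrow>
      {diff_grp G (Q i j) (Q i j') | i. i < card (carrier G)} = carrier G - {\<one>\<^bsub>G\<^esub>})"

definition DCA_P12 :: "('a, 'b) monoid_scheme \<Rightarrow> nat \<Rightarrow> (nat \<Rightarrow> nat \<Rightarrow> 'a) \<Rightarrow> bool" where
  "DCA_P12 G k Q \<longleftrightarrow> is_normalized_DCA G k Q \<and> P1 G k Q \<and> P2 G k Q"

end

theory Submission
  imports Defs
begin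

text \<open>Normalise the HDM so that its last column is \<one>, then stack it on top of the DCA
  over the hole H. The rows coming from the HDM produce every difference outside H exactly
  once; the rows coming from the DCA produce the differences inside H, and supply the last
  row of \<one>'s and the repeated \<one>'s in every column. For the cyclic case, the subgroup of
  order h of Z_n consists of the multiples of d = n / h, and multiplication by d is an
  isomorphism from Z_h onto it, which transports the DCA over Z_h to one over the hole.\<close>

lemma diff_grp_subgroup:
  assumes "group G" "subgroup H G" "x \<in> H" "y \<in> H"
  shows "diff_grp (G\<lparr>carrier := H\<rparr>) x y = diff_grp G x y"
  using assms group.m_inv_consistent[OF assms(1,2)] by (simp add: diff_grp_def)

lemma (in comm_group) diff_grp_mult_inv_right:
  assumes "a \<in> carrier G" "b \<in> carrier G" "c \<in> carrier G"
  shows "diff_grp G (a \<otimes> inv c) (b \<otimes> inv c) = diff_grp G a b"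
proof -
  have "c \<otimes> (inv b \<otimes> inv c) = inv b"
    using assms by (simp add: m_lcomm[of c] r_inv)
  then show ?thesis using assms by (simp add: diff_grp_def inv_mult m_ac)
qed

lemma (in group) diff_grp_self: "x \<in> carrier G \<Longrightarrow> diff_grp G x x = \<one>"
  by (simp add: diff_grp_def)

lemma is_HDM_diff_image:
  assumes "is_HDM G H k Q" "finite (carrier G)" "j < k" "j' < k" "j \<noteq> j'"
  shows "(\<lambda>i. diff_grp G (Q i j) (Q i j')) ` {..<card (carrier G) - card H} = carrier G - H"
proof -
  have "image_mset (\<lambda>i. diff_grp G (Q i j) (Q i j')) (mset_set {0..<card (carrier G) - card H})
      = mset_set (carrier G - H)"
    using assms(1,3-5) unfolding is_HDM_def by blast
  then have "set_mset (image_mset (\<lambda>i. diff_grp G (Q i j) (Q i j'))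
      (mset_set {0..<card (carrier G) - card H})) = set_mset (mset_set (carrier G - H))"
    by (rule arg_cong)
  then show ?thesis using assms(2) by (simp add: atLeast0LessThan)
qed

lemma (in comm_group) is_HDM_normalize:
  assumes "is_HDM G H k Q"
  shows "is_HDM G H k (\<lambda>i j. Q i j \<otimes> inv Q i (k - 1))"
proof -
  let ?m = "card (carrier G) - card H"
  have Q: "\<And>i j. i < ?m \<Longrightarrow> j < k \<Longrightarrow> Q i j \<in> carrier G"
    using assms unfolding is_HDM_def by blast
  have "image_mset (\<lambda>i. diff_grp G (Q i j \<otimes> inv Q i (k - 1)) (Q i j' \<otimes> inv Q i (k - 1)))
          (mset_set {0..<?m})
      = image_mset (\<lambda>i. diff_grp G (Q i j) (Q i j')) (mset_set {0..<?m})"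
    if "j < k" "j' < k" for j j'
    using that Q by (intro image_mset_cong) (simp add: diff_grp_mult_inv_right)
  then show ?thesis using assms Q unfolding is_HDM_def by auto
qed

subsection \<open>Stacking an HDM on a DCA over the hole\<close>

definition stack_rows :: "nat \<Rightarrow> (nat \<Rightarrow> nat \<Rightarrow> 'a) \<Rightarrow> (nat \<Rightarrow> nat \<Rightarrow> 'a) \<Rightarrow> nat \<Rightarrow> nat \<Rightarrow> 'a"
  where "stack_rows m A B i j = (if i < m then A i j else B (i - m) j)"

lemma image_lessThan_add:
  fixes m h :: nat
  shows "f ` {..<m + h} = f ` {..<m} \<union> (\<lambda>i. f (m + i)) ` {..<h}"
proof -
  have "{..<m + h} = {..<m} \<union> (+) m ` {..<h}"
    using ivl_disj_un_one(2)[of m "m + h"] by (simp add: lessThan_atLeast0 add.commute)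
  then show ?thesis by (simp add: image_Un image_image)
qed

locale hdm_dca_stack = group +
  fixes H :: "'a set" and k :: nat and Q D :: "nat \<Rightarrow> nat \<Rightarrow> 'a"
  assumes finite_carrier: "finite (carrier G)"
    and hole: "subgroup H G"
    and HDM: "is_HDM G H k Q"
    and HDM_last_column: "\<And>i. i < card (carrier G) - card H \<Longrightarrow> 0 < k \<Longrightarrow> Q i (k - 1) = \<one>"
    and DCA: "DCA_P12 (G\<lparr>carrier := H\<rparr>) k D"
begin

definition hdm_rows :: nat where "hdm_rows = card (carrier G) - card H"

abbreviation stacked :: "nat \<Rightarrow> nat \<Rightarrow> 'a" where "stacked \<equiv> stack_rows hdm_rows Q D"

lemma hole_subset: "H \<subseteq> carrier G"
  using hole subgroup.subset by blast

lemma card_carrier_eq: "card (carrier G) = hdm_rows + card H"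
  using card_mono[OF finite_carrier hole_subset] by (simp add: hdm_rows_def)

lemma HDM_entry: "i < hdm_rows \<Longrightarrow> j < k \<Longrightarrow> Q i j \<in> carrier G"
  using HDM unfolding is_HDM_def hdm_rows_def by blast

lemma DCA_entry: "i \<le> card H \<Longrightarrow> j < k \<Longrightarrow> D i j \<in> H"
  using DCA unfolding DCA_P12_def is_normalized_DCA_def is_DCA_def by auto

lemma DCA_covers:
  "j < k \<Longrightarrow> j' < k \<Longrightarrow> j \<noteq> j' \<Longrightarrow>
    H \<subseteq> {diff_grp (G\<lparr>carrier := H\<rparr>) (D i j) (D i j') | i. i \<le> card H}"
  using DCA unfolding DCA_P12_def is_normalized_DCA_def is_DCA_def by (simp add: less_Suc_eq_le)

lemma DCA_last_row: "j < k \<Longrightarrow> D (card H) j = \<one>"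
  using DCA unfolding DCA_P12_def is_normalized_DCA_def by simp

lemma DCA_last_column: "i \<le> card H \<Longrightarrow> 0 < k \<Longrightarrow> D i (k - 1) = \<one>"
  using DCA unfolding DCA_P12_def is_normalized_DCA_def by simp

lemma DCA_P1: "j < k \<Longrightarrow> 2 \<le> card {i. i \<le> card H \<and> D i j = \<one>}"
  using DCA unfolding DCA_P12_def P1_def by simp

lemma DCA_P2:
  "j < k \<Longrightarrow> j' < k \<Longrightarrow> j \<noteq> j' \<Longrightarrow> j \<noteq> k - 1 \<Longrightarrow> j' \<noteq> k - 1 \<Longrightarrow>
    {diff_grp (G\<lparr>carrier := H\<rparr>) (D i j) (D i j') | i. i < card H} = H - {\<one>}"
  using DCA unfolding DCA_P12_def P2_def by simp

lemma stacked_upper: "i < hdm_rows \<Longrightarrow> stacked i j = Q i j"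
  by (simp add: stack_rows_def)

lemma stacked_lower: "stacked (hdm_rows + i) j = D i j"
  by (simp add: stack_rows_def)

lemma stacked_cases:
  assumes "i \<le> card (carrier G)"
  obtains "i < hdm_rows" "stacked i j = Q i j"
    | i' where "i = hdm_rows + i'" "i' \<le> card H" "stacked i j = D i' j"
  using assms card_carrier_eq stacked_upper stacked_lower
  by (metis add_le_cancel_left le_add_diff_inverse not_less)

lemma stacked_entry:
  assumes "i \<le> card (carrier G)" "j < k"
  shows "stacked i j \<in> carrier G"
  using assms(1)
  by (cases rule: stacked_cases[of i j]) (use assms(2) HDM_entry DCA_entry hole_subset in auto)

lemma stacked_diff_lower:
  assumes "i \<le> card H" "j < k" "j' < k"
  shows "diff_grp G (stacked (hdm_rows + i) j) (stacked (hdm_rows + i) j')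
       = diff_grp (G\<lparr>carrier := H\<rparr>) (D i j) (D i j')"
  using assms DCA_entry diff_grp_subgroup[OF is_group hole] by (simp add: stacked_lower)

lemma stacked_diffs_upper:
  assumes "j < k" "j' < k" "j \<noteq> j'"
  shows "(\<lambda>i. diff_grp G (stacked i j) (stacked i j')) ` {..<hdm_rows} = carrier G - H"
proof -
  have "(\<lambda>i. diff_grp G (stacked i j) (stacked i j')) ` {..<hdm_rows}
      = (\<lambda>i. diff_grp G (Q i j) (Q i j')) ` {..<hdm_rows}"
    by (intro image_cong) (simp_all add: stacked_upper)
  then show ?thesis
    using is_HDM_diff_image[OF HDM finite_carrier assms] by (simp add: hdm_rows_def)
qed

lemma stacked_is_DCA: "is_DCA G k (card (carrier G) + 1) stacked"
  unfolding is_DCA_def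
proof (intro conjI allI impI subsetI)
  fix i j assume "i < card (carrier G) + 1" "j < k"
  then show "stacked i j \<in> carrier G" by (simp add: stacked_entry)
next
  fix j j' g assume jj: "j < k" "j' < k" "j \<noteq> j'" and g: "g \<in> carrier G"
  show "g \<in> {diff_grp G (stacked i j) (stacked i j') | i. i < card (carrier G) + 1}"
  proof (cases "g \<in> H")
    case True
    then obtain i where i: "i \<le> card H" "g = diff_grp (G\<lparr>carrier := H\<rparr>) (D i j) (D i j')"
      using DCA_covers[OF jj] by blast
    then have "g = diff_grp G (stacked (hdm_rows + i) j) (stacked (hdm_rows + i) j')"
      using stacked_diff_lower jj by simp
    moreover have "hdm_rows + i < card (carrier G) + 1"
      using i(1) card_carrier_eq by linarith
    ultimately show ?thesis by blast
  next
    case False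
    then have "g \<in> (\<lambda>i. diff_grp G (stacked i j) (stacked i j')) ` {..<hdm_rows}"
      using g stacked_diffs_upper[OF jj] by simp
    then obtain i where i: "i < hdm_rows" "g = diff_grp G (stacked i j) (stacked i j')"
      by blast
    moreover have "i < card (carrier G) + 1"
      using i(1) card_carrier_eq by linarith
    ultimately show ?thesis by blast
  qed
qed

lemma stacked_normalized: "is_normalized_DCA G k stacked"
  unfolding is_normalized_DCA_def
proof (intro conjI allI impI stacked_is_DCA)
  fix j assume "j < k"
  then show "stacked (card (carrier G)) j = \<one>"
    using DCA_last_row by (simp add: card_carrier_eq stacked_lower)
next
  fix i assume "i \<le> card (carrier G)" "0 < k"
  then show "stacked i (k - 1) = \<one>"
    by (cases rule: stacked_cases[of i "k - 1"])
      (use HDM_last_column DCA_last_column in \<open>auto simp: hdm_rows_def\<close>)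
qed

lemma stacked_P1: "P1 G k stacked"
  unfolding P1_def
proof (intro allI impI)
  fix j assume j: "j < k"
  have "(+) hdm_rows ` {i. i \<le> card H \<and> D i j = \<one>}
      \<subseteq> {i. i \<le> card (carrier G) \<and> stacked i j = \<one>}"
    using card_carrier_eq stacked_lower by auto
  then have "card ((+) hdm_rows ` {i. i \<le> card H \<and> D i j = \<one>})
      \<le> card {i. i \<le> card (carrier G) \<and> stacked i j = \<one>}"
    by (rule card_mono[rotated]) simp
  then show "2 \<le> card {i. i \<le> card (carrier G) \<and> stacked i j = \<one>}"
    using DCA_P1[OF j] by (simp add: card_image)
qed

lemma stacked_P2: "P2 G k stacked"
  unfolding P2_def
proof (intro allI impI)
  fix j j' assume jj: "j < k" "j' < k" "j \<noteq> j' \<and> j \<noteq> k - 1 \<and> j' \<noteq> k - 1"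
  let ?d = "\<lambda>i. diff_grp G (stacked i j) (stacked i j')"
  have "(\<lambda>i. ?d (hdm_rows + i)) ` {..<card H}
      = {diff_grp (G\<lparr>carrier := H\<rparr>) (D i j) (D i j') | i. i < card H}"
    using stacked_diff_lower jj by auto
  then have lower: "(\<lambda>i. ?d (hdm_rows + i)) ` {..<card H} = H - {\<one>}"
    using DCA_P2 jj by simp
  have "{?d i | i. i < card (carrier G)} = ?d ` {..<hdm_rows + card H}"
    using card_carrier_eq by auto
  also have "\<dots> = (carrier G - H) \<union> (H - {\<one>})"
    unfolding image_lessThan_add lower using stacked_diffs_upper jj by simp
  also have "\<dots> = carrier G - {\<one>}"
    using hole_subset subgroup.one_closed[OF hole] by blast
  finally show "{?d i | i. i < card (carrier G)} = carrier G - {\<one>}" .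
qed

theorem DCA_P12_stacked: "DCA_P12 G k stacked"
  using stacked_normalized stacked_P1 stacked_P2 by (simp add: DCA_P12_def)

end

theorem (in comm_group) DCA_P12_from_HDM:
  assumes "finite (carrier G)" "subgroup H G" "is_HDM G H k Q" "DCA_P12 (G\<lparr>carrier := H\<rparr>) k D"
  shows "\<exists>E. DCA_P12 G k E"
proof -
  let ?Q = "\<lambda>i j. Q i j \<otimes> inv Q i (k - 1)"
  have "Q i (k - 1) \<in> carrier G" if "i < card (carrier G) - card H" "0 < k" for i
    using assms(3) that unfolding is_HDM_def by simp
  then interpret hdm_dca_stack G H k ?Q D
    by (intro hdm_dca_stack.intro is_group hdm_dca_stack_axioms.intro assms(1,2,4)
        is_HDM_normalize[OF assms(3)]) simp
  show ?thesis using DCA_P12_stacked by blast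
qed

subsection \<open>Transport along a difference-preserving bijection\<close>

locale diff_preserving_bij = K: group K + L: group L
  for K :: "('a, 'b) monoid_scheme" and L :: "('c, 'd) monoid_scheme" +
  fixes \<phi> :: "'a \<Rightarrow> 'c"
  assumes bij: "bij_betw \<phi> (carrier K) (carrier L)"
    and diff: "\<And>x y. x \<in> carrier K \<Longrightarrow> y \<in> carrier K \<Longrightarrow>
      \<phi> (diff_grp K x y) = diff_grp L (\<phi> x) (\<phi> y)"
begin

lemma image_carrier: "\<phi> ` carrier K = carrier L"
  using bij by (simp add: bij_betw_def)

lemma card_carrier: "card (carrier L) = card (carrier K)"
  using bij by (metis bij_betw_same_card)

lemma map_one: "\<phi> \<one>\<^bsub>K\<^esub> = \<one>\<^bsub>L\<^esub>"
proof -
  have "\<phi> \<one>\<^bsub>K\<^esub> \<in> carrier L" using image_carrier by blast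
  then show ?thesis
    using diff[of "\<one>\<^bsub>K\<^esub>" "\<one>\<^bsub>K\<^esub>"] K.diff_grp_self L.diff_grp_self by simp
qed

lemma map_eq_one_iff: "x \<in> carrier K \<Longrightarrow> \<phi> x = \<one>\<^bsub>L\<^esub> \<longleftrightarrow> x = \<one>\<^bsub>K\<^esub>"
  using bij map_one by (metis K.one_closed bij_betw_def inj_on_eq_iff)

lemma image_diffs:
  assumes "\<And>i. P i \<Longrightarrow> D i j \<in> carrier K \<and> D i j' \<in> carrier K"
  shows "{diff_grp L (\<phi> (D i j)) (\<phi> (D i j')) | i. P i} = \<phi> ` {diff_grp K (D i j) (D i j') | i. P i}"
  unfolding setcompr_eq_image image_image using assms diff by (intro image_cong) auto

lemma is_DCA_map:
  assumes "is_DCA K k eta D"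
  shows "is_DCA L k eta (\<lambda>i j. \<phi> (D i j))"
proof -
  have entry: "\<And>i j. i < eta \<Longrightarrow> j < k \<Longrightarrow> D i j \<in> carrier K"
    and cover: "\<And>j j'. j < k \<Longrightarrow> j' < k \<Longrightarrow> j \<noteq> j' \<Longrightarrow>
      carrier K \<subseteq> {diff_grp K (D i j) (D i j') | i. i < eta}"
    using assms unfolding is_DCA_def by simp_all
  have "carrier L \<subseteq> {diff_grp L (\<phi> (D i j)) (\<phi> (D i j')) | i. i < eta}"
    if jj: "j < k" "j' < k" "j \<noteq> j'" for j j'
  proof -
    have "carrier L \<subseteq> \<phi> ` {diff_grp K (D i j) (D i j') | i. i < eta}"
      unfolding image_carrier[symmetric] using cover[OF jj] by (rule image_mono)
    also have "\<dots> = {diff_grp L (\<phi> (D i j)) (\<phi> (D i j')) | i. i < eta}"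
      using entry jj by (intro image_diffs[symmetric]) simp
    finally show ?thesis .
  qed
  moreover have "\<phi> (D i j) \<in> carrier L" if "i < eta" "j < k" for i j
    using entry[OF that] image_carrier by blast
  ultimately show ?thesis unfolding is_DCA_def by blast
qed

lemma DCA_P12_map:
  assumes D: "DCA_P12 K k D"
  shows "DCA_P12 L k (\<lambda>i j. \<phi> (D i j))"
proof -
  have entry: "\<And>i j. i \<le> card (carrier K) \<Longrightarrow> j < k \<Longrightarrow> D i j \<in> carrier K"
    using D unfolding DCA_P12_def is_normalized_DCA_def is_DCA_def by auto
  have "is_normalized_DCA L k (\<lambda>i j. \<phi> (D i j))"
    using D is_DCA_map map_one unfolding DCA_P12_def is_normalized_DCA_def card_carrier
    by auto
  moreover have "P1 L k (\<lambda>i j. \<phi> (D i j))"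
  proof -
    have "{i. i \<le> card (carrier L) \<and> \<phi> (D i j) = \<one>\<^bsub>L\<^esub>}
        = {i. i \<le> card (carrier K) \<and> D i j = \<one>\<^bsub>K\<^esub>}" if "j < k" for j
      using entry that map_eq_one_iff card_carrier by auto
    then show ?thesis using D unfolding DCA_P12_def P1_def by simp
  qed
  moreover have "P2 L k (\<lambda>i j. \<phi> (D i j))"
  proof -
    have "\<phi> ` (carrier K - {\<one>\<^bsub>K\<^esub>}) = carrier L - {\<one>\<^bsub>L\<^esub>}"
      using inj_on_image_set_diff[of \<phi> "carrier K" "carrier K" "{\<one>\<^bsub>K\<^esub>}"] bij
      by (simp add: bij_betw_def map_one)
    moreover have "{diff_grp L (\<phi> (D i j)) (\<phi> (D i j')) | i. i < card (carrier K)}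
        = \<phi> ` {diff_grp K (D i j) (D i j') | i. i < card (carrier K)}" if "j < k" "j' < k" for j j'
      using entry that by (intro image_diffs) simp
    ultimately show ?thesis using D unfolding DCA_P12_def P2_def card_carrier by simp
  qed
  ultimately show ?thesis by (simp add: DCA_P12_def)
qed

end

subsection \<open>The cyclic case\<close>

lemma subgroup_integer_mod_group_multiples:
  assumes n: "0 < n" and sg: "subgroup S (integer_mod_group n)"
  obtains d where "0 < d" "n = d * card S" "S = (\<lambda>y. int d * y) ` {0..<int (card S)}"
proof -
  let ?Z = "integer_mod_group n"
  let ?h = "card S"
  interpret Z: group ?Z by simp
  interpret S: group "?Z\<lparr>carrier := S\<rparr>" using Z.subgroup_imp_group[OF sg] .
  have cZ: "carrier ?Z = {0..<int n}" using n by (simp add: carrier_integer_mod_group)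
  have S_sub: "S \<subseteq> {0..<int n}" using sg subgroup.subset cZ by blast
  then have "finite S" using finite_subset by blast
  moreover have "0 \<in> S" using sg subgroup.one_closed by fastforce
  ultimately have h_pos: "0 < ?h" using card_gt_0_iff by blast
  have "card (rcosets\<^bsub>?Z\<^esub> S) * ?h = n"
    using Z.lagrange[OF sg] cZ by (simp add: order_def)
  then obtain d where nd: "n = d * ?h" by metis
  then have d: "0 < d" using n by (cases d) auto
  have "S \<subseteq> (\<lambda>y. int d * y) ` {0..<int ?h}"
  proof
    fix x assume xS: "x \<in> S"
    have "x [^]\<^bsub>?Z\<lparr>carrier := S\<rparr>\<^esub> order (?Z\<lparr>carrier := S\<rparr>) = \<one>\<^bsub>?Z\<lparr>carrier := S\<rparr>\<^esub>"
      using S.pow_order_eq_1 xS by simp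
    then have "(int ?h * x) mod int n = 0"
      using Z.nat_pow_consistent[of x ?h S] by (simp add: order_def)
    then have "int d * int ?h dvd x * int ?h" using nd by (simp add: mod_eq_0_iff_dvd mult.commute)
    then obtain y where xy: "x = int d * y" using h_pos by (auto elim: dvdE)
    have "0 \<le> x" "x < int n" using xS S_sub by auto
    then have "0 \<le> y" "y < int ?h" using xy d nd by (auto simp: zero_le_mult_iff)
    then show "x \<in> (\<lambda>y. int d * y) ` {0..<int ?h}" using xy by auto
  qed
  moreover have "card ((\<lambda>y. int d * y) ` {0..<int ?h}) = ?h"
    using d by (subst card_image) (auto simp: inj_on_def)
  ultimately have "S = (\<lambda>y. int d * y) ` {0..<int ?h}"
    using card_subset_eq by (metis finite_atLeastLessThan_int finite_imageI)
  then show thesis using that d nd by blast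
qed

lemma diff_grp_integer_mod_group_mult:
  assumes "0 < d" "n = d * h" "x \<in> {0..<int h}" "y \<in> {0..<int h}"
  shows "int d * diff_grp (integer_mod_group h) x y = diff_grp (integer_mod_group n) (int d * x) (int d * y)"
proof -
  have "int d * y \<in> carrier (integer_mod_group n)"
    using assms by (auto simp: carrier_integer_mod_group)
  moreover have "diff_grp (integer_mod_group h) x y = (x - y) mod int h"
    using assms by (simp add: diff_grp_def carrier_integer_mod_group mod_add_right_eq)
  ultimately show ?thesis
    using assms by (simp add: diff_grp_def mod_add_right_eq mult_mod_right right_diff_distrib)
qed

lemma DCA_P12_integer_mod_group_hole:
  assumes "0 < n" "subgroup S (integer_mod_group n)" "DCA_P12 (integer_mod_group (card S)) k D"
  shows "\<exists>E. DCA_P12 (integer_mod_group n\<lparr>carrier := S\<rparr>) k E"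
proof -
  let ?h = "card S"
  obtain d where d: "0 < d" "n = d * ?h" and S: "S = (\<lambda>y. int d * y) ` {0..<int ?h}"
    using subgroup_integer_mod_group_multiples[OF assms(1,2)] by blast
  have h_pos: "0 < ?h" using d assms(1) by auto
  have cZh: "carrier (integer_mod_group ?h) = {0..<int ?h}"
    using h_pos by (simp add: carrier_integer_mod_group)
  interpret diff_preserving_bij "integer_mod_group ?h" "integer_mod_group n\<lparr>carrier := S\<rparr>"
    "\<lambda>y. int d * y"
  proof (intro diff_preserving_bij.intro diff_preserving_bij_axioms.intro group_integer_mod_group)
    show "group (integer_mod_group n\<lparr>carrier := S\<rparr>)"
      using group.subgroup_imp_group[OF group_integer_mod_group assms(2)] .
    show "bij_betw (\<lambda>y. int d * y) (carrier (integer_mod_group ?h)) (carrier (integer_mod_group n\<lparr>carrier := S\<rparr>))"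
      unfolding cZh using S d by (auto simp: bij_betw_def inj_on_def)
    fix x y assume xy: "x \<in> carrier (integer_mod_group ?h)" "y \<in> carrier (integer_mod_group ?h)"
    then have "int d * x \<in> S" "int d * y \<in> S" using cZh by (subst S, force)+
    then show "int d * diff_grp (integer_mod_group ?h) x y
        = diff_grp (integer_mod_group n\<lparr>carrier := S\<rparr>) (int d * x) (int d * y)"
      using diff_grp_integer_mod_group_mult[OF d] xy cZh
        diff_grp_subgroup[OF group_integer_mod_group assms(2)] by simp
  qed
  show ?thesis using DCA_P12_map[OF assms(3)] by blast
qed

theorem mainTheorem6:
  fixes G :: "('a, 'b) monoid_scheme" and H :: "'a set" and n h k :: nat
  shows
   "(comm_group G \<and> finite (carrier G) \<and> card (carrier G) = n \<and>
     subgroup H G \<and> card H = h \<and>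
     (\<exists>Q. is_HDM G H k Q) \<and>
     (\<exists>D. DCA_P12 (G\<lparr>carrier := H\<rparr>) k D)
     \<longrightarrow> (\<exists>D. DCA_P12 G k D))
    \<and>
    (\<forall>Hc. 0 < n \<and> subgroup Hc (integer_mod_group n) \<and> card Hc = h \<and>
       (\<exists>Q. is_HDM (integer_mod_group n) Hc k Q) \<and>
       (\<exists>D. DCA_P12 (integer_mod_group h) k D)
       \<longrightarrow> (\<exists>D. DCA_P12 (integer_mod_group n) k D))"
proof (intro conjI allI impI)
  show "\<exists>D. DCA_P12 G k D"
    if "comm_group G \<and> finite (carrier G) \<and> card (carrier G) = n \<and> subgroup H G \<and> card H = h \<and>
      (\<exists>Q. is_HDM G H k Q) \<and> (\<exists>D. DCA_P12 (G\<lparr>carrier := H\<rparr>) k D)"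
    using that comm_group.DCA_P12_from_HDM by metis
next
  fix Hc
  assume "0 < n \<and> subgroup Hc (integer_mod_group n) \<and> card Hc = h \<and>
    (\<exists>Q. is_HDM (integer_mod_group n) Hc k Q) \<and> (\<exists>D. DCA_P12 (integer_mod_group h) k D)"
  then obtain Q D where n: "0 < n" and sg: "subgroup Hc (integer_mod_group n)"
    and Q: "is_HDM (integer_mod_group n) Hc k Q" and D: "DCA_P12 (integer_mod_group (card Hc)) k D"
    by blast
  obtain E where "DCA_P12 (integer_mod_group n\<lparr>carrier := Hc\<rparr>) k E"
    using DCA_P12_integer_mod_group_hole[OF n sg D] by blast
  then show "\<exists>D. DCA_P12 (integer_mod_group n) k D"
    using comm_group.DCA_P12_from_HDM[OF abelian_integer_mod_group _ sg Q] n
    by (simp add: carrier_integer_mod_group)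
qed

end
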